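(* For every integer $n\geq 1$ let $a_n=\sqrt[n+1]{(n+1)!}-\sqrt[n]{n!}$. Then the sequence $(a_n)_{n\geq1}$ is strictly decreasing, i.e. $a_{n+1}<a_n$ for every integer $n\geq 1$.
   Context: The sequence $a_n$ is called the Lalescu sequence. *)

theory Defs
  imports Complex_Main
begin

definition lalescu :: "nat \<Rightarrow> real" where
  "lalescu n = root (n + 1) (fact (n + 1)) - root n (fact n)"

end

theory Submission
  imports Defs
begin

text \<open>Writing \<open>x\<^sub>n = root n (n!)\<close>, the claim \<open>a\<^sub>n\<^sub>+\<^sub>1 < a\<^sub>n\<close> is the strict concavity
\<open>x\<^sub>n\<^sub>+\<^sub>2 + x\<^sub>n < 2 x\<^sub>n\<^sub>+\<^sub>1\<close>; for \<open>n \<le> 4\<close> it is checked numerically.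
For larger \<open>n\<close> let \<open>m = n + 1\<close>, \<open>l = ln m!\<close>, \<open>s = ln m - l/m\<close>, \<open>L = ln (m+1) - ln m\<close>.
Then \<open>x\<^sub>n\<close>, \<open>x\<^sub>n\<^sub>+\<^sub>1\<close>, \<open>x\<^sub>n\<^sub>+\<^sub>2\<close> are \<open>exp (l/m)\<close> times \<open>exp (-a)\<close>, \<open>1\<close>, \<open>exp b\<close>
with \<open>a = s/(m-1)\<close>, \<open>b = (s+L)/(m+1)\<close>, so it suffices that \<open>exp (-a) + exp b < 2\<close>.
As \<open>cosh z \<le> exp (z\<^sup>2/2)\<close>, this follows from \<open>(a+b)\<^sup>2 < 4(a-b)\<close>, a polynomial inequality in
\<open>m, L, s\<close>. It is verified using the Stirling-type bounds
\<open>m ln m - m \<le> l \<le> m ln m - m + 1 + (ln m)/2\<close> and \<open>2/(2m+1) \<le> L \<le> (2m+1)/(2m(m+1))\<close>,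
which suffice as soon as \<open>(1 + ln m)\<^sup>2 < 2m - 3\<close>, i.e. for \<open>m \<ge> 6\<close>.\<close>

lemma pow2_mult_fact_le_fact_double: "2 ^ k * fact k \<le> (fact (2 * k) :: nat)"
proof (induction k)
  case 0 then show ?case by simp
next
  case (Suc k)
  have "2 ^ Suc k * fact (Suc k) = (2 * k + 2) * (2 ^ k * fact k)"
    by (simp add: algebra_simps)
  also have "\<dots> \<le> ((2 * k + 2) * (2 * k + 1)) * fact (2 * k)"
    using Suc.IH by (intro mult_mono) auto
  also have "\<dots> = fact (2 * Suc k)"
    by (simp add: algebra_simps)
  finally show ?case .
qed

lemma exp_series_real: "(\<lambda>k. x ^ k / fact k) sums exp (x :: real)"
  using exp_converges[of x] by (simp add: divide_inverse_commute)

lemma cosh_le_exp_half_square: "cosh z \<le> exp (z\<^sup>2 / 2)" for z :: real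
proof -
  have cosh: "(\<lambda>n. if even n then z ^ n / fact n else 0) sums cosh z"
    using cosh_converges[of z] by (simp add: divide_inverse_commute cong: if_cong)
  have exp: "(\<lambda>n. if even n then (z\<^sup>2 / 2) ^ (n div 2) / fact (n div 2) else 0) sums exp (z\<^sup>2 / 2)"
    using sums_if[OF sums_zero exp_series_real] by simp
  show ?thesis
  proof (rule sums_le[OF _ cosh exp])
    fix n :: nat
    show "(if even n then z ^ n / fact n else 0)
        \<le> (if even n then (z\<^sup>2 / 2) ^ (n div 2) / fact (n div 2) else 0)"
    proof (cases "even n")
      case True
      then obtain k where n: "n = 2 * k" by (rule evenE)
      have "(z\<^sup>2) ^ k / fact (2 * k) \<le> (z\<^sup>2) ^ k / (2 ^ k * fact k)"
        using pow2_mult_fact_le_fact_double[of k, THEN of_nat_mono, where 'a = real]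
        by (intro divide_left_mono) auto
      then show ?thesis
        using n by (simp add: power_mult power_divide)
    qed simp
  qed
qed

lemma exp_neg_add_exp_less_2:
  fixes a b :: real
  assumes "(a + b)\<^sup>2 < 4 * (a - b)"
  shows "exp (- a) + exp b < 2"
proof -
  define z w where "z = (a + b) / 2" and "w = (a - b) / 2"
  have "exp (- a) + exp b = 2 * exp (- w) * cosh z"
    by (simp add: z_def w_def cosh_def field_simps flip: exp_add)
  also have "\<dots> \<le> 2 * exp (- w) * exp (z\<^sup>2 / 2)"
    by (simp add: cosh_le_exp_half_square)
  also have "\<dots> < 2 * exp (- w) * exp w"
    using assms by (simp add: z_def w_def power_divide)
  also have "\<dots> = 2"
    by (simp add: exp_minus)
  finally show ?thesis .
qed

lemma ln_add_one_ge:
  fixes t :: real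
  assumes "0 \<le> t"
  shows "2 * t / (2 + t) \<le> ln (1 + t)"
proof -
  let ?f = "\<lambda>x::real. ln (1 + x) - 2 * x / (2 + x)"
  have "?f 0 \<le> ?f t"
  proof (rule DERIV_nonneg_imp_nondecreasing[OF assms])
    fix x :: real
    assume "0 \<le> x"
    then have pos: "0 < 1 + x" "0 < 2 + x"
      by auto
    have "(?f has_real_derivative 1 / (1 + x) - 4 / (2 + x)\<^sup>2) (at x)"
      using pos by - (rule derivative_eq_intros refl | simp add: power2_eq_square)+
    also have "1 / (1 + x) - 4 / (2 + x)\<^sup>2 = x\<^sup>2 / ((1 + x) * (2 + x)\<^sup>2)"
      using pos by (simp add: divide_simps) (simp add: algebra_simps power2_eq_square)
    finally have "(?f has_real_derivative x\<^sup>2 / ((1 + x) * (2 + x)\<^sup>2)) (at x)" .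
    moreover have "0 \<le> x\<^sup>2 / ((1 + x) * (2 + x)\<^sup>2)"
      using \<open>0 \<le> x\<close> by simp
    ultimately show "\<exists>y. (?f has_real_derivative y) (at x) \<and> 0 \<le> y"
      by blast
  qed
  then show ?thesis by simp
qed

lemma ln_add_one_le:
  fixes t :: real
  assumes "0 \<le> t"
  shows "ln (1 + t) \<le> t * (2 + t) / (2 * (1 + t))"
proof -
  let ?f = "\<lambda>x::real. x * (2 + x) / (2 * (1 + x)) - ln (1 + x)"
  have "?f 0 \<le> ?f t"
  proof (rule DERIV_nonneg_imp_nondecreasing[OF assms])
    fix x :: real
    assume "0 \<le> x"
    then have pos: "0 < 1 + x"
      by auto
    have "(?f has_real_derivative x\<^sup>2 / (2 * (1 + x)\<^sup>2)) (at x)"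
      using pos by - ((rule derivative_eq_intros refl | simp add: divide_simps power2_eq_square)+,
        simp add: algebra_simps)
    moreover have "0 \<le> x\<^sup>2 / (2 * (1 + x)\<^sup>2)"
      by simp
    ultimately show "\<exists>y. (?f has_real_derivative y) (at x) \<and> 0 \<le> y"
      by blast
  qed
  then show ?thesis by simp
qed

lemma ln_add_one_minus_ln:
  fixes x :: real
  assumes "0 < x"
  shows "ln (x + 1) - ln x = ln (1 + 1 / x)"
proof -
  have "1 + 1 / x = (x + 1) / x"
    using assms by (simp add: field_simps)
  then show ?thesis
    using assms by (simp add: ln_div)
qed

lemma ln_add_one_minus_ln_ge:
  fixes x :: real
  assumes "0 < x"
  shows "2 / (2 * x + 1) \<le> ln (x + 1) - ln x"
proof -
  have "2 / (2 * x + 1) = 2 * (1 / x) / (2 + 1 / x)"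
    using assms by (simp add: field_simps)
  then show ?thesis
    using ln_add_one_ge[of "1 / x"] assms by (simp add: ln_add_one_minus_ln)
qed

lemma ln_add_one_minus_ln_le:
  fixes x :: real
  assumes "0 < x"
  shows "ln (x + 1) - ln x \<le> (2 * x + 1) / (2 * x * (x + 1))"
proof -
  have "(2 * x + 1) / (2 * x * (x + 1)) = 1 / x * (2 + 1 / x) / (2 * (1 + 1 / x))"
    using assms by (simp add: divide_simps)
  then show ?thesis
    using ln_add_one_le[of "1 / x"] assms by (simp add: ln_add_one_minus_ln)
qed

lemma ln_add_one_minus_ln_le_inverse:
  fixes x :: real
  assumes "0 < x"
  shows "ln (x + 1) - ln x \<le> 1 / x"
  using ln_add_one_self_le_self[of "1 / x"] assms by (simp add: ln_add_one_minus_ln)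

lemma ln_fact_Suc: "ln (fact (Suc k) :: real) = ln (real k + 1) + ln (fact k)"
  by (simp add: ln_mult)

lemma ln_fact_ge:
  assumes "1 \<le> k"
  shows "k * ln k - k \<le> ln (fact k :: real)"
  using assms
proof (induction k rule: nat_induct_at_least)
  case base then show ?case by simp
next
  case (Suc k)
  have "k * (ln (k + 1) - ln k) \<le> 1"
    using ln_add_one_minus_ln_le_inverse[of k] Suc.hyps by (simp add: field_simps)
  then show ?case
    using Suc.IH ln_fact_Suc[of k] by (simp add: algebra_simps)
qed

lemma ln_fact_le:
  assumes "1 \<le> k"
  shows "ln (fact k :: real) \<le> k * ln k - k + 1 + ln k / 2"
  using assms
proof (induction k rule: nat_induct_at_least)
  case base then show ?case by simp
next
  case (Suc k)
  have "1 \<le> (k + 1 / 2) * (ln (k + 1) - ln k)"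
    using ln_add_one_minus_ln_ge[of k] Suc.hyps by (simp add: field_simps)
  then show ?case
    using Suc.IH ln_fact_Suc[of k] by (simp add: algebra_simps)
qed

lemma exp_partial_sum_le:
  fixes x :: real
  assumes "0 \<le> x"
  shows "(\<Sum>k<n. x ^ k / fact k) \<le> exp x"
  using sum_le_suminf[OF sums_summable[OF exp_series_real], of "{..<n}"] assms
  by (simp add: sums_unique[OF exp_series_real])

lemma ln_6_less: "ln (6 :: real) < 19 / 10"
proof -
  have "6 < (\<Sum>k<5. (19 / 10 :: real) ^ k / fact k)"
    by (simp add: numeral_eq_Suc fact_numeral)
  also have "\<dots> \<le> exp (19 / 10)"
    by (rule exp_partial_sum_le) simp
  finally show ?thesis
    using ln_less_cancel_iff[of 6 "exp (19 / 10)"] by simp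
qed

lemma ln_add_one_le_minus_one:
  fixes m :: real
  assumes "3 \<le> m"
  shows "ln (m + 1) \<le> m - 1"
proof -
  have "2 * 2 \<le> (m - 1) * (m - 1)"
    using assms by (intro mult_mono) auto
  then have "m + 1 \<le> (\<Sum>k<3. (m - 1) ^ k / fact k)"
    by (simp add: numeral_eq_Suc power2_eq_square)
  also have "\<dots> \<le> exp (m - 1)"
    by (rule exp_partial_sum_le) (use assms in simp)
  finally show ?thesis
    using assms ln_le_cancel_iff[of "m + 1" "exp (m - 1)"] by simp
qed

lemma one_add_ln_squared_less:
  fixes n :: nat
  assumes "6 \<le> n"
  shows "(1 + ln (real n))\<^sup>2 < 2 * real n - 3"
  using assms
proof (induction n rule: nat_induct_at_least)
  case base
  have "(1 + ln (6 :: real))\<^sup>2 < (1 + 19 / 10)\<^sup>2"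
    using ln_6_less by (intro power_strict_mono) auto
  then show ?case
    by (simp add: power2_eq_square)
next
  case (Suc n)
  define m where "m = real n"
  have m: "6 \<le> m"
    using Suc.hyps by (simp add: m_def)
  have "(1 + ln (m + 1))\<^sup>2 - (1 + ln m)\<^sup>2 = (ln (m + 1) - ln m) * (2 + ln (m + 1) + ln m)"
    by (simp add: algebra_simps power2_eq_square)
  also have "\<dots> \<le> (1 / m) * (2 * m)"
  proof (rule mult_mono)
    show "ln (m + 1) - ln m \<le> 1 / m"
      using m by (intro ln_add_one_minus_ln_le_inverse) simp
    show "2 + ln (m + 1) + ln m \<le> 2 * m"
    proof -
      have "ln m \<le> ln (m + 1)"
        using m by simp
      then show ?thesis
        using ln_add_one_le_minus_one[of m] m by linarith
    qed
  qed (use m in simp_all)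
  finally have "(1 + ln (m + 1))\<^sup>2 \<le> (1 + ln m)\<^sup>2 + 2"
    using m by simp
  then show ?case
    using Suc.IH by (simp add: m_def add.commute)
qed

text \<open>The hypothesis of \<open>exp_neg_add_exp_less_2\<close> for \<open>a = s/(m-1)\<close>, \<open>b = (s+L)/(m+1)\<close>,
cleared of denominators and written in terms of \<open>u = L (m - 1)\<close>.\<close>

definition lalescu_discr :: "real \<Rightarrow> real \<Rightarrow> real \<Rightarrow> real" where
  "lalescu_discr m u s = (2 * m * s + u)\<^sup>2 - 4 * (m\<^sup>2 - 1) * (2 * s - u)"

lemma lalescu_discr_scaled:
  fixes m s L :: real
  assumes "m - 1 \<noteq> 0" "m + 1 \<noteq> 0"
  defines "a \<equiv> s / (m - 1)" and "b \<equiv> (s + L) / (m + 1)"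
  shows "((a + b)\<^sup>2 - 4 * (a - b)) * ((m - 1) * (m + 1))\<^sup>2 = lalescu_discr m (L * (m - 1)) s"
proof -
  have a: "a * (m - 1) = s" and b: "b * (m + 1) = s + L"
    using assms by simp_all
  have "(a + b) * ((m - 1) * (m + 1)) = (a * (m - 1)) * (m + 1) + (b * (m + 1)) * (m - 1)"
    by (simp add: algebra_simps)
  then have sum: "(a + b) * ((m - 1) * (m + 1)) = 2 * m * s + L * (m - 1)"
    unfolding a b by (simp add: algebra_simps)
  have "(a - b) * ((m - 1) * (m + 1)) = (a * (m - 1)) * (m + 1) - (b * (m + 1)) * (m - 1)"
    by (simp add: algebra_simps)
  then have diff: "(a - b) * ((m - 1) * (m + 1)) = 2 * s - L * (m - 1)"
    unfolding a b by (simp add: algebra_simps)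
  have "((a + b)\<^sup>2 - 4 * (a - b)) * ((m - 1) * (m + 1))\<^sup>2
      = ((a + b) * ((m - 1) * (m + 1)))\<^sup>2 - 4 * ((m - 1) * (m + 1)) * ((a - b) * ((m - 1) * (m + 1)))"
    by (simp add: algebra_simps power2_eq_square)
  also have "\<dots> = lalescu_discr m (L * (m - 1)) s"
    unfolding sum diff lalescu_discr_def by (simp add: algebra_simps power2_eq_square)
  finally show ?thesis .
qed

lemma lalescu_discr_expand_at_one:
  "lalescu_discr m u s = lalescu_discr m u 1 - (1 - s) * (8 + 4 * m * u) + 4 * m\<^sup>2 * (1 - s)\<^sup>2"
  by (simp add: lalescu_discr_def algebra_simps power2_eq_square)

lemma lalescu_discr_one_le:
  fixes m u :: real
  assumes m: "6 \<le> m" and u0: "0 \<le> u" and u_le: "u * (2 * m * (m + 1)) \<le> (2 * m + 1) * (m - 1)"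
  shows "lalescu_discr m u 1 \<le> 4 - 2 * m"
proof -
  have mm: "0 < 2 * m * (m + 1)"
    using m by simp
  have "6 * m \<le> m * m"
    using m by (intro mult_right_mono) auto
  then have "0 \<le> m\<^sup>2 - 5 * m - 2"
    using m unfolding power2_eq_square by linarith
  have "(2 * m + 1) * (m - 1) \<le> 1 * (2 * m * (m + 1))"
    using m by (simp add: algebra_simps)
  then have "u \<le> 1"
    using u_le mm by (meson mult_le_cancel_right_pos order_trans)
  then have "u\<^sup>2 \<le> 1"
    using u0 by (simp add: power_le_one)
  have "0 \<le> m\<^sup>2 + m - 1"
    using m zero_le_power2[of m] by linarith
  have "4 * u * (m\<^sup>2 + m - 1) * (2 * m * (m + 1)) = 4 * (m\<^sup>2 + m - 1) * (u * (2 * m * (m + 1)))"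
    by (simp add: algebra_simps)
  also have "\<dots> \<le> 4 * (m\<^sup>2 + m - 1) * ((2 * m + 1) * (m - 1))"
    using u_le \<open>0 \<le> m\<^sup>2 + m - 1\<close> by (intro mult_left_mono) auto
  also have "\<dots> = (4 * m\<^sup>2 - 2 * m - 5) * (2 * m * (m + 1)) - 2 * (m\<^sup>2 - 5 * m - 2)"
    by (simp add: algebra_simps power2_eq_square)
  also have "\<dots> \<le> (4 * m\<^sup>2 - 2 * m - 5) * (2 * m * (m + 1))"
    using \<open>0 \<le> m\<^sup>2 - 5 * m - 2\<close> by simp
  finally have "4 * u * (m\<^sup>2 + m - 1) \<le> 4 * m\<^sup>2 - 2 * m - 5"
    using mm by (rule mult_right_le_imp_le)
  moreover have "lalescu_discr m u 1 = 8 - 4 * m\<^sup>2 + 4 * u * (m\<^sup>2 + m - 1) + u\<^sup>2"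
    by (simp add: lalescu_discr_def algebra_simps power2_eq_square)
  ultimately show ?thesis
    using \<open>u\<^sup>2 \<le> 1\<close> by linarith
qed

text \<open>As a function of \<open>D = 1 - s \<in> [0, e/m]\<close> the discriminant is a convex quadratic,
so it suffices to check both endpoints.\<close>

lemma lalescu_discr_neg:
  fixes m u s e :: real
  assumes m: "6 \<le> m" and u0: "0 \<le> u" and u_ge: "m - 2 \<le> m * u"
    and u_le: "u * (2 * m * (m + 1)) \<le> (2 * m + 1) * (m - 1)"
    and s: "s \<le> 1" and e: "m * (1 - s) \<le> e" "1 \<le> e" "(2 * e - 1)\<^sup>2 < 2 * m - 3"
  shows "lalescu_discr m u s < 0"
proof -
  define D where "D = 1 - s"
  define X where "X = 8 + 4 * m * u"
  have D0: "0 \<le> D"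
    using s by (simp add: D_def)
  have X: "4 * m \<le> X"
    using u_ge by (simp add: X_def)
  have "4 * m\<^sup>2 * D\<^sup>2 = 4 * (m * D) * (m * D)"
    by (simp add: power2_eq_square)
  also have "\<dots> \<le> 4 * (m * D) * e"
    using e(1) D0 m by (intro mult_left_mono) (auto simp: D_def)
  finally have "lalescu_discr m u s \<le> (4 - 2 * m) + D * (4 * m * e - X)"
    using lalescu_discr_expand_at_one[of m u s] lalescu_discr_one_le[OF m u0 u_le]
    by (simp add: D_def X_def algebra_simps)
  also have "\<dots> < 0"
  proof (cases "4 * m * e \<le> X")
    case True
    then have "D * (4 * m * e - X) \<le> 0"
      using D0 by (simp add: mult_nonneg_nonpos)
    then show ?thesis
      using m by simp
  next
    case False
    have "m * (D * (4 * m * e - X)) = (m * D) * (4 * m * e - X)"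
      by simp
    also have "\<dots> \<le> e * (4 * m * e - X)"
      using False e(1) by (intro mult_right_mono) (auto simp: D_def)
    also have "\<dots> \<le> m * (4 * e\<^sup>2 - 4 * e)"
      using mult_left_mono[OF X, of e] e(2) by (simp add: algebra_simps power2_eq_square)
    finally have "D * (4 * m * e - X) \<le> 4 * e\<^sup>2 - 4 * e"
      by (rule mult_left_le_imp_le) (use m in simp)
    also have "\<dots> = (2 * e - 1)\<^sup>2 - 1"
      by (simp add: power2_eq_square algebra_simps)
    finally show ?thesis
      using e(3) by simp
  qed
  finally show ?thesis .
qed

lemma exp_neg_add_exp_less_2_of_bounds:
  fixes m s L e :: real
  assumes m: "6 \<le> m"
    and L: "2 / (2 * m + 1) \<le> L" "L \<le> (2 * m + 1) / (2 * m * (m + 1))"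
    and s: "s \<le> 1" "1 - s \<le> e / m"
    and e: "1 \<le> e" "(2 * e - 1)\<^sup>2 < 2 * m - 3"
  shows "exp (- (s / (m - 1))) + exp ((s + L) / (m + 1)) < 2"
proof -
  define u where "u = L * (m - 1)"
  have "2 \<le> L * (2 * m + 1)"
    using L(1) m by (simp add: divide_le_eq)
  then have "(m - 2) * (2 * m + 1) \<le> m * L * (2 * m + 1) * (m - 1)"
    using mult_right_mono[of 2 "L * (2 * m + 1)" "m * (m - 1)"] m by (simp add: algebra_simps)
  then have u_ge: "m - 2 \<le> m * u"
    using m by (simp add: u_def mult.assoc mult.left_commute[of "2 * m + 1"] mult_le_cancel_right_pos)
  have "L * (2 * m * (m + 1)) \<le> 2 * m + 1"
    using L(2) m by (simp add: le_divide_eq)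
  then have "L * (2 * m * (m + 1)) * (m - 1) \<le> (2 * m + 1) * (m - 1)"
    by (rule mult_right_mono) (use m in simp)
  then have u_le: "u * (2 * m * (m + 1)) \<le> (2 * m + 1) * (m - 1)"
    by (simp add: u_def algebra_simps)
  have "0 \<le> L"
    using m by (intro order_trans[OF _ L(1)]) simp
  then have "0 \<le> u"
    using m by (simp add: u_def)
  moreover have "m * (1 - s) \<le> e"
    using s(2) m by (simp add: le_divide_eq mult.commute)
  ultimately have "lalescu_discr m u s < 0"
    using lalescu_discr_neg[OF m _ u_ge u_le s(1) _ e] by simp
  moreover have nz: "m - 1 \<noteq> 0" "m + 1 \<noteq> 0"
    using m by auto
  ultimately have "((s / (m - 1) + (s + L) / (m + 1))\<^sup>2 - 4 * (s / (m - 1) - (s + L) / (m + 1)))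
      * ((m - 1) * (m + 1))\<^sup>2 < 0"
    using lalescu_discr_scaled[OF nz, of s L] by (simp only: u_def)
  then have "(s / (m - 1) + (s + L) / (m + 1))\<^sup>2 < 4 * (s / (m - 1) - (s + L) / (m + 1))"
    using nz by (simp add: mult_less_0_iff)
  then show ?thesis
    by (rule exp_neg_add_exp_less_2)
qed

lemma root_le_of_le_power: "0 < n \<Longrightarrow> 0 \<le> u \<Longrightarrow> x \<le> u ^ n \<Longrightarrow> root n x \<le> u"
  by (metis real_root_le_iff real_root_power_cancel)

lemma le_root_of_power_le: "0 < n \<Longrightarrow> 0 \<le> u \<Longrightarrow> u ^ n \<le> x \<Longrightarrow> u \<le> root n x"
  by (metis real_root_le_iff real_root_power_cancel)

lemma root_fact_midpoint_less_small:
  fixes n :: nat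
  assumes "1 \<le> n" "n \<le> 4"
  shows "root (n + 2) (fact (n + 2)) + root n (fact n) < 2 * root (n + 1) (fact (n + 1))"
proof -
  have "n = 1 \<or> n = 2 \<or> n = 3 \<or> n = 4"
    using assms by auto
  then show ?thesis
  proof (elim disjE)
    assume "n = 1"
    have "root 3 6 \<le> (18172 / 10000 :: real)"
      by (rule root_le_of_le_power) (simp_all add: power_divide)
    moreover have "14142 / 10000 \<le> root 2 (2 :: real)"
      by (rule le_root_of_power_le) (simp_all add: power_divide)
    ultimately show ?thesis
      unfolding \<open>n = 1\<close> by (simp add: numeral_eq_Suc)
  next
    assume "n = 2"
    have "root 4 24 \<le> (221337 / 100000 :: real)" "root 2 2 \<le> (141422 / 100000 :: real)"
      by (rule root_le_of_le_power; simp add: power_divide)+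
    moreover have "181712 / 100000 \<le> root 3 (6 :: real)"
      by (rule le_root_of_power_le) (simp_all add: power_divide)
    ultimately show ?thesis
      unfolding \<open>n = 2\<close> by (simp add: numeral_eq_Suc)
  next
    assume "n = 3"
    have "root 5 120 \<le> (260518 / 100000 :: real)" "root 3 6 \<le> (181713 / 100000 :: real)"
      by (rule root_le_of_le_power; simp add: power_divide)+
    moreover have "221336 / 100000 \<le> root 4 (24 :: real)"
      by (rule le_root_of_power_le) (simp_all add: power_divide)
    ultimately show ?thesis
      unfolding \<open>n = 3\<close> by (simp add: numeral_eq_Suc)
  next
    assume "n = 4"
    have "root 6 720 \<le> (29938 / 10000 :: real)" "root 4 24 \<le> (221337 / 100000 :: real)"
      by (rule root_le_of_le_power; simp add: power_divide)+
    moreover have "260517 / 100000 \<le> root 5 (120 :: real)"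
      by (rule le_root_of_power_le) (simp_all add: power_divide)
    ultimately show ?thesis
      unfolding \<open>n = 4\<close> by (simp add: numeral_eq_Suc)
  qed
qed

lemma exp_neg_add_exp_less_2_at_fact:
  fixes k :: nat
  assumes "6 \<le> k"
  defines "m \<equiv> real k"
  defines "s \<equiv> ln m - ln (fact k) / m" and "L \<equiv> ln (m + 1) - ln m"
  shows "exp (- (s / (m - 1))) + exp ((s + L) / (m + 1)) < 2"
proof -
  define e where "e = 1 + ln m / 2"
  have m: "6 \<le> m"
    using assms by (simp add: m_def)
  have "m * ln m - m \<le> ln (fact k)" "ln (fact k) \<le> m * ln m - m + e"
    using ln_fact_ge[of k] ln_fact_le[of k] assms unfolding e_def m_def by simp_all
  moreover have "1 - s = (ln (fact k) + m - m * ln m) / m"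
    using m by (simp add: s_def field_simps)
  ultimately have "0 \<le> 1 - s" "1 - s \<le> e / m"
    using m by (simp_all add: divide_right_mono)
  moreover have "(2 * e - 1)\<^sup>2 < 2 * m - 3"
    using one_add_ln_squared_less[OF assms(1)] by (simp add: e_def m_def)
  moreover have "1 \<le> e"
    using m by (simp add: e_def)
  ultimately show ?thesis
    using m ln_add_one_minus_ln_ge[of m] ln_add_one_minus_ln_le[of m]
    by (intro exp_neg_add_exp_less_2_of_bounds) (simp_all add: L_def)
qed

lemma root_eq_exp_ln_div: "0 < k \<Longrightarrow> 0 < x \<Longrightarrow> root k x = exp (ln x / k)"
  by (simp add: root_powr_inverse powr_def)

lemma root_fact_midpoint_less_large:
  fixes n :: nat
  assumes "5 \<le> n"
  shows "root (n + 2) (fact (n + 2)) + root n (fact n) < 2 * root (n + 1) (fact (n + 1))"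
proof -
  define m where "m = real (n + 1)"
  define l where "l = ln (fact (n + 1) :: real)"
  define s where "s = ln m - l / m"
  define L where "L = ln (m + 1) - ln m"
  have m: "6 \<le> m"
    using assms by (simp add: m_def)
  have less_2: "exp (- (s / (m - 1))) + exp ((s + L) / (m + 1)) < 2"
    unfolding s_def L_def l_def m_def using assms by (intro exp_neg_add_exp_less_2_at_fact) simp
  have root_n: "root n (fact n) = exp (l / m) * exp (- (s / (m - 1)))"
  proof -
    have "ln (fact n :: real) = l - ln m"
      using ln_fact_Suc[of n] by (simp add: l_def m_def)
    then have "ln (fact n :: real) / n = (l - ln m) / (m - 1)"
      by (simp add: m_def)
    also have "\<dots> = l / m - s / (m - 1)"
      using m by (simp add: s_def field_simps)
    finally show ?thesis
      using assms by (simp add: root_eq_exp_ln_div flip: exp_add)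
  qed
  have root_Suc: "root (n + 1) (fact (n + 1)) = exp (l / m)"
    by (simp add: root_eq_exp_ln_div l_def m_def)
  have root_Suc_Suc: "root (n + 2) (fact (n + 2)) = exp (l / m) * exp ((s + L) / (m + 1))"
  proof -
    have "ln (fact (n + 2) :: real) = ln (m + 1) + l"
      using ln_fact_Suc[of "n + 1"] by (simp add: l_def m_def add.commute)
    then have "ln (fact (n + 2) :: real) / (n + 2) = (ln (m + 1) + l) / (m + 1)"
      by (simp add: m_def add.commute)
    also have "\<dots> = l / m + (s + L) / (m + 1)"
      using m by (simp add: s_def L_def divide_simps) (simp add: algebra_simps)
    finally show ?thesis
      by (simp add: root_eq_exp_ln_div flip: exp_add)
  qed
  have "root (n + 2) (fact (n + 2)) + root n (fact n)
      = exp (l / m) * (exp (- (s / (m - 1))) + exp ((s + L) / (m + 1)))"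
    unfolding root_n root_Suc_Suc by (simp add: algebra_simps)
  also have "\<dots> < exp (l / m) * 2"
    using less_2 by simp
  finally show ?thesis
    unfolding root_Suc by simp
qed

theorem mainTheorem1:
  fixes n :: nat
  assumes "n \<ge> 1"
  shows "lalescu (n + 1) < lalescu n"
proof -
  have "root (n + 2) (fact (n + 2)) + root n (fact n) < 2 * root (n + 1) (fact (n + 1))"
  proof (cases "n \<le> 4")
    case True
    then show ?thesis
      using assms by (rule root_fact_midpoint_less_small[rotated])
  next
    case False
    then show ?thesis
      by (intro root_fact_midpoint_less_large) simp
  qed
  then show ?thesis
    by (simp add: lalescu_def add.assoc)
qed

end
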